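(* Let $p$ be a prime, $n\ge2$, $\hat{X}_{n,p}=\{\mathbf{x}\in\mathbb{Z}_p^n : (\mathbf{x}[1],\dots,\mathbf{x}[n-1])\neq(0,\dots,0)\}$ (entries indexed $0,\dots,n-1$), and $\mathcal{L}_{n,p}=\{L_{\mathbf{a}}:\mathbf{a}\in\mathbb{Z}_p^n,\ \mathbf{a}[0]=1\}$ where $L_{\mathbf{a}}:\hat{X}_{n,p}\to\{0,1\}$, $L_{\mathbf{a}}(\mathbf{x})=1$ iff $\mathbf{a}\cdot\mathbf{x}\equiv1\pmod p$. For any query function $g:\hat{X}_{n,p}\to\{-1,+1\}$, there are at most $p^{2n/3+2}$ predicates $f\in\mathcal{L}_{n,p}$ that are not $1/p^{n/3}$-independent from $g$.
   Context: For a predicate $f$ on $\hat{X}_{n,p}$ let $S_f=\{\mathbf{x}\in\hat{X}_{n,p}: f(\mathbf{x})=1\}$. A predicate $f$ is $\xi$-independent from $g$ if $\left|\mathbf{E}_{x\in S_f}[g(x)]-\mathbf{E}_{x\in\hat{X}_{n,p}}[g(x)]\right|\le\xi$, expectations taken over the uniform distribution on the indicated sets. *)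

theory Defs
  imports "HOL-Computational_Algebra.Primes" Complex_Main
begin

text \<open>Vectors of Z_p^n are represented as functions nat => nat with entries
  in {0..<p} at indices 0..n-1 and 0 elsewhere (extensional representation).\<close>

definition Zpn :: "nat \<Rightarrow> nat \<Rightarrow> (nat \<Rightarrow> nat) set" where
  "Zpn n p = {x. (\<forall>i<n. x i < p) \<and> (\<forall>i\<ge>n. x i = 0)}"

definition Xhat :: "nat \<Rightarrow> nat \<Rightarrow> (nat \<Rightarrow> nat) set" where
  "Xhat n p = {x \<in> Zpn n p. \<exists>i\<in>{1..<n}. x i \<noteq> 0}"

definition dotp :: "nat \<Rightarrow> (nat \<Rightarrow> nat) \<Rightarrow> (nat \<Rightarrow> nat) \<Rightarrow> nat" where
  "dotp n a x = (\<Sum>i<n. a i * x i)"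

text \<open>The predicate L_a on Xhat n p (value 0 outside Xhat, for definiteness).\<close>
definition Lpred :: "nat \<Rightarrow> nat \<Rightarrow> (nat \<Rightarrow> nat) \<Rightarrow> (nat \<Rightarrow> nat) \<Rightarrow> real" where
  "Lpred n p a = (\<lambda>x. if x \<in> Xhat n p \<and> dotp n a x mod p = 1 then 1 else 0)"

definition Lclass :: "nat \<Rightarrow> nat \<Rightarrow> ((nat \<Rightarrow> nat) \<Rightarrow> real) set" where
  "Lclass n p = {Lpred n p a | a. a \<in> Zpn n p \<and> a 0 = 1}"

definition avg :: "'a set \<Rightarrow> ('a \<Rightarrow> real) \<Rightarrow> real" where
  "avg S g = (\<Sum>x\<in>S. g x) / real (card S)"

definition Sf :: "nat \<Rightarrow> nat \<Rightarrow> ((nat \<Rightarrow> nat) \<Rightarrow> real) \<Rightarrow> (nat \<Rightarrow> nat) set" where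
  "Sf n p f = {x \<in> Xhat n p. f x = 1}"

definition xi_independent ::
  "nat \<Rightarrow> nat \<Rightarrow> real \<Rightarrow> ((nat \<Rightarrow> nat) \<Rightarrow> real) \<Rightarrow> ((nat \<Rightarrow> nat) \<Rightarrow> real) \<Rightarrow> bool" where
  "xi_independent n p \<xi> f g \<longleftrightarrow> \<bar>avg (Sf n p f) g - avg (Xhat n p) g\<bar> \<le> \<xi>"

end

(*
  Every x in Xhat is v(0 := t) for a unique tail v in Xtail and t < p, and for a 0 = 1 the set
  S_{L_a} meets the fibre {v(0 := t) | t < p} of v in exactly one point, the one with
  t = 1 - a.v (mod p). Hence the average of g over S_{L_a} differs from its average over Xhat
  by bias(a) / |Xtail|, where bias(a) sums over v the value of g at that point, centred at the
  mean of g over the fibre of v.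

  Translating a by the multiples of a vector d with d.v = 1 and d.w = 0 shows that, as a ranges
  over the coefficient vectors, the terms of v and w in bias(a) are uncorrelated unless w is one
  of the p multiples of v. So the sum of bias(a)^2 is at most 2 p |Xtail|^2, and by Chebyshev's
  inequality at most 2 p^(1 + 2n/3) vectors a have |bias(a)| > |Xtail| p^(-n/3).
*)

theory Submission
  imports Defs "HOL-Number_Theory.Cong"
begin

lemma sum_rotate_mod:
  assumes "c < (p::nat)"
  shows "(\<Sum>k<p. F ((c + k) mod p)) = (\<Sum>s<p. F s)"
proof -
  have inj: "inj_on (\<lambda>k. (c + k) mod p) {..<p}"
    by (rule inj_onI) (simp add: cong_def[symmetric] cong_add_lcancel_nat, simp add: cong_def)
  have "(\<lambda>k. (c + k) mod p) ` {..<p} = {..<p}"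
    by (rule endo_inj_surj[OF _ _ inj]) auto
  then show ?thesis
    using sum.reindex[OF inj, of F] by simp
qed

lemma cong_solve_2x2_int:
  fixes a b c e m :: int
  assumes "coprime (a * e - b * c) m"
  obtains x y where "[x * a + y * b = 1] (mod m)" and "[x * c + y * e = 0] (mod m)"
proof -
  obtain z where z: "[(a * e - b * c) * z = 1] (mod m)"
    using cong_solve_coprime_int[OF assms] by blast
  have "e * z * a + - c * z * b = (a * e - b * c) * z" "e * z * c + - c * z * e = 0"
    by algebra+
  with z that[of "e * z" "- c * z"] show thesis
    by simp
qed

lemma sum_diff_avg: "finite S \<Longrightarrow> (\<Sum>x\<in>S. h x - avg S h) = 0"
  by (cases "S = {}") (simp_all add: avg_def sum_subtractf)

lemma sum_sq_diff_avg_le: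
  assumes "finite S"
  shows "(\<Sum>x\<in>S. (h x - avg S h)\<^sup>2) \<le> (\<Sum>x\<in>S. (h x)\<^sup>2)"
proof -
  let ?m = "avg S h"
  have sum_h: "(\<Sum>x\<in>S. h x) = real (card S) * ?m"
    using assms by (cases "S = {}") (simp_all add: avg_def)
  have "(\<Sum>x\<in>S. (h x - ?m)\<^sup>2) = (\<Sum>x\<in>S. (h x)\<^sup>2) - 2 * ?m * (\<Sum>x\<in>S. h x) + real (card S) * ?m\<^sup>2"
    by (simp add: power2_diff sum_subtractf sum.distrib sum_distrib_left sum_distrib_right mult.commute
        mult.left_commute)
  also have "\<dots> = (\<Sum>x\<in>S. (h x)\<^sup>2) - real (card S) * ?m\<^sup>2"
    by (simp add: sum_h power2_eq_square)
  finally show ?thesis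
    by simp
qed

lemma card_abs_gt_mult_sq_le:
  fixes Y :: "'a \<Rightarrow> real"
  assumes "finite A" "0 \<le> c"
  shows "real (card {a \<in> A. c < \<bar>Y a\<bar>}) * c\<^sup>2 \<le> (\<Sum>a\<in>A. (Y a)\<^sup>2)"
proof -
  have "real (card {a \<in> A. c < \<bar>Y a\<bar>}) * c\<^sup>2 = (\<Sum>a\<in>{a \<in> A. c < \<bar>Y a\<bar>}. c\<^sup>2)"
    by simp
  also have "\<dots> \<le> (\<Sum>a\<in>{a \<in> A. c < \<bar>Y a\<bar>}. (Y a)\<^sup>2)"
  proof (rule sum_mono)
    fix a assume "a \<in> {a \<in> A. c < \<bar>Y a\<bar>}"
    then have "c\<^sup>2 \<le> \<bar>Y a\<bar>\<^sup>2"
      using assms(2) by (intro power_mono) auto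
    then show "c\<^sup>2 \<le> (Y a)\<^sup>2"
      by simp
  qed
  also have "\<dots> \<le> (\<Sum>a\<in>A. (Y a)\<^sup>2)"
    by (rule sum_mono2) (use assms(1) in auto)
  finally show ?thesis .
qed

lemma le_powr_if_mult_inverse_sq_le:
  fixes p K e :: real
  assumes p: "p \<ge> 2" and K: "K * (1 / p powr e)\<^sup>2 \<le> 2 * p"
  shows "K \<le> p powr (2 * e + 2)"
proof -
  have "K \<le> 2 * p * (p powr e)\<^sup>2"
    using K p by (simp add: power_divide divide_le_eq)
  also have "\<dots> \<le> p\<^sup>2 * (p powr e)\<^sup>2"
    using p by (intro mult_right_mono) (auto simp: power2_eq_square)
  also have "(p powr e)\<^sup>2 = p powr (2 * e)"
    using p by (subst powr_power) auto
  also have "p\<^sup>2 * p powr (2 * e) = p powr (2 * e + 2)"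
    using p by (simp add: powr_add)
  finally show ?thesis .
qed

lemma fun_upd_zero_eq_iff:
  assumes "v 0 = 0" "w 0 = 0"
  shows "v(0 := t) = w(0 := s) \<longleftrightarrow> v = w \<and> t = s"
proof
  assume eq: "v(0 := t) = w(0 := s)"
  have "v i = w i" for i
    using fun_cong[OF eq, of i] assms by (cases "i = 0") auto
  moreover have "t = s"
    using fun_cong[OF eq, of 0] by simp
  ultimately show "v = w \<and> t = s"
    by auto
qed simp

section \<open>Coefficient vectors and tails\<close>

definition dotp_mod :: "nat \<Rightarrow> nat \<Rightarrow> (nat \<Rightarrow> nat) \<Rightarrow> (nat \<Rightarrow> nat) \<Rightarrow> nat" where
  "dotp_mod n p a v = dotp n a v mod p"

definition Lcoeffs :: "nat \<Rightarrow> nat \<Rightarrow> (nat \<Rightarrow> nat) set" where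
  "Lcoeffs n p = {a \<in> Zpn n p. a 0 = 1}"

definition head_zero :: "nat \<Rightarrow> nat \<Rightarrow> (nat \<Rightarrow> nat) set" where
  "head_zero n p = {d \<in> Zpn n p. d 0 = 0}"

definition Xtail :: "nat \<Rightarrow> nat \<Rightarrow> (nat \<Rightarrow> nat) set" where
  "Xtail n p = {v \<in> head_zero n p. \<exists>i\<in>{1..<n}. v i \<noteq> 0}"

lemma finite_Zpn: "finite (Zpn n p)"
proof -
  have "Zpn n p \<subseteq> {f. \<forall>i. (i \<in> {..<n} \<longrightarrow> f i \<in> {..<p}) \<and> (i \<notin> {..<n} \<longrightarrow> f i = 0)}"
    by (auto simp: Zpn_def)
  then show ?thesis
    using finite_subset finite_set_of_finite_funs[of "{..<n}" "{..<p}" 0] by blast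
qed

lemma finite_Lcoeffs: "finite (Lcoeffs n p)"
  and finite_Xtail: "finite (Xtail n p)"
  using finite_Zpn by (auto simp: Lcoeffs_def Xtail_def head_zero_def)

lemma card_Lcoeffs_le: "card (Lcoeffs n p) \<le> card (Xtail n p) + 1"
proof -
  have "card (Lcoeffs n p) \<le> card (head_zero n p)"
  proof (rule card_inj_on_le[where f = "\<lambda>a. a(0 := 0)"])
    show "inj_on (\<lambda>a. a(0 := 0)) (Lcoeffs n p)"
    proof (rule inj_onI)
      fix a b assume a: "a \<in> Lcoeffs n p" and b: "b \<in> Lcoeffs n p" and eq: "a(0 := 0) = b(0 := 0)"
      have "a i = b i" for i
        using fun_cong[OF eq, of i] a b by (cases "i = 0") (simp_all add: Lcoeffs_def)
      then show "a = b" ..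
    qed
    show "(\<lambda>a. a(0 := 0)) ` Lcoeffs n p \<subseteq> head_zero n p"
      by (auto simp: Lcoeffs_def head_zero_def Zpn_def)
    show "finite (head_zero n p)"
      using finite_Zpn by (simp add: head_zero_def)
  qed
  also have "\<dots> \<le> card (insert (\<lambda>_. 0) (Xtail n p))"
  proof (rule card_mono)
    show "head_zero n p \<subseteq> insert (\<lambda>_. 0) (Xtail n p)"
    proof
      fix d assume d: "d \<in> head_zero n p"
      show "d \<in> insert (\<lambda>_. 0) (Xtail n p)"
      proof (cases "\<exists>i\<in>{1..<n}. d i \<noteq> 0")
        case True
        with d show ?thesis
          by (simp add: Xtail_def)
      next
        case False
        with d have "d i = 0" for i
          by (cases "i = 0"; cases "i < n") (auto simp: head_zero_def Zpn_def)
        then show ?thesis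
          by auto
      qed
    qed
  qed (simp add: finite_Xtail)
  also have "\<dots> \<le> card (Xtail n p) + 1"
    by (simp add: finite_Xtail card_insert_if)
  finally show ?thesis .
qed

lemma Xtail_nonempty:
  assumes "p \<ge> 2" "n \<ge> 2"
  shows "Xtail n p \<noteq> {}"
proof -
  have "(\<lambda>i. if i = 1 then 1 else 0) \<in> Xtail n p"
    using assms by (auto simp: Xtail_def head_zero_def Zpn_def)
  then show ?thesis
    by blast
qed

definition translate :: "nat \<Rightarrow> nat \<Rightarrow> (nat \<Rightarrow> nat) \<Rightarrow> (nat \<Rightarrow> nat) \<Rightarrow> nat \<Rightarrow> nat" where
  "translate p k d a = (\<lambda>i. (a i + k * d i) mod p)"

lemma cong_dotp_translate:
  "[dotp n (translate p k d a) v = dotp n a v + k * dotp n d v] (mod p)"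
proof -
  have "[dotp n (translate p k d a) v = (\<Sum>i<n. (a i + k * d i) * v i)] (mod p)"
    unfolding dotp_def translate_def
    by (rule cong_sum) (simp add: cong_def mod_mult_left_eq)
  then show ?thesis
    by (simp add: dotp_def algebra_simps sum.distrib sum_distrib_left)
qed

lemma dotp_mod_translate:
  assumes "dotp_mod n p d v = c"
  shows "dotp_mod n p (translate p k d a) v = (dotp_mod n p a v + k * c) mod p"
  using cong_dotp_translate[of n p k d a v] assms
  unfolding dotp_mod_def cong_def by (metis mod_add_cong mod_mult_right_eq mod_mod_trivial)

lemma translate_in_Lcoeffs:
  assumes "p \<ge> 2" "d \<in> head_zero n p" "a \<in> Lcoeffs n p"
  shows "translate p k d a \<in> Lcoeffs n p"
  using assms by (auto simp: translate_def Lcoeffs_def head_zero_def Zpn_def)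

lemma inj_on_translate: "inj_on (translate p k d) (Lcoeffs n p)"
proof
  fix a b assume a: "a \<in> Lcoeffs n p" and b: "b \<in> Lcoeffs n p"
    and eq: "translate p k d a = translate p k d b"
  show "a = b"
  proof
    fix i
    have "[a i + k * d i = b i + k * d i] (mod p)"
      using fun_cong[OF eq, of i] by (simp add: translate_def cong_def)
    then have "a i mod p = b i mod p"
      using cong_add_rcancel_nat unfolding cong_def by blast
    then show "a i = b i"
      using a b by (cases "i < n") (auto simp: Lcoeffs_def Zpn_def)
  qed
qed

lemma translate_Lcoeffs:
  assumes "p \<ge> 2" "d \<in> head_zero n p"
  shows "translate p k d ` Lcoeffs n p = Lcoeffs n p"
  using endo_inj_surj[OF finite_Lcoeffs _ inj_on_translate] translate_in_Lcoeffs[OF assms]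
  by blast

(* a \<mapsto> a + k d permutes Lcoeffs, shifts a.v by k and fixes a.w; now average over k < p. *)
lemma sum_Lcoeffs_translation_invariant:
  assumes p: "p \<ge> 2" and d: "d \<in> head_zero n p"
    and dv: "dotp_mod n p d v = 1" and dw: "dotp_mod n p d w = 0"
  shows "real p * (\<Sum>a\<in>Lcoeffs n p. F (dotp_mod n p a v) * H (dotp_mod n p a w))
       = (\<Sum>s<p. F s) * (\<Sum>a\<in>Lcoeffs n p. H (dotp_mod n p a w))"
proof -
  let ?A = "Lcoeffs n p"
  let ?S = "\<Sum>a\<in>?A. F (dotp_mod n p a v) * H (dotp_mod n p a w)"
  have shifted: "?S = (\<Sum>a\<in>?A. F ((dotp_mod n p a v + k) mod p) * H (dotp_mod n p a w))" for k
  proof -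
    have "?S = (\<Sum>a\<in>translate p k d ` ?A. F (dotp_mod n p a v) * H (dotp_mod n p a w))"
      using translate_Lcoeffs[OF p d] by simp
    also have "\<dots> = (\<Sum>a\<in>?A. F ((dotp_mod n p a v + k) mod p) * H (dotp_mod n p a w))"
      using dotp_mod_translate[OF dv] dotp_mod_translate[OF dw]
      by (simp add: sum.reindex[OF inj_on_translate] dotp_mod_def)
    finally show ?thesis .
  qed
  have "real p * ?S = (\<Sum>k<p. \<Sum>a\<in>?A. F ((dotp_mod n p a v + k) mod p) * H (dotp_mod n p a w))"
    using shifted by simp
  also have "\<dots> = (\<Sum>a\<in>?A. (\<Sum>k<p. F ((dotp_mod n p a v + k) mod p)) * H (dotp_mod n p a w))"
    by (subst sum.swap) (simp add: sum_distrib_right)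
  also have "\<dots> = (\<Sum>a\<in>?A. (\<Sum>s<p. F s) * H (dotp_mod n p a w))"
    using p by (simp add: sum_rotate_mod dotp_mod_def)
  finally show ?thesis
    by (simp add: sum_distrib_left)
qed

section \<open>Separating linear forms\<close>

lemma obtain_head_zero_form:
  fixes x y :: int
  assumes p: "p > 0" and i: "i \<in> {1..<n}" and j: "j \<in> {1..<n}"
  obtains d where "d \<in> head_zero n p"
    and "\<And>u. [int (dotp n d u) = x * int (u i) + y * int (u j)] (mod int p)"
proof
  define c where "c k = (if k = i then x else 0) + (if k = j then y else 0)" for k
  define d where "d k = nat (c k mod int p)" for k
  have int_d: "int (d k) = c k mod int p" for k
    using p by (simp add: d_def)
  have "d k < p" for k
    using int_d[of k] p by (metis of_nat_less_iff of_nat_0_less_iff pos_mod_bound)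
  moreover have "d k = 0" if "k \<noteq> i" "k \<noteq> j" for k
    using that by (simp add: d_def c_def)
  ultimately show "d \<in> head_zero n p"
    using i j by (auto simp: head_zero_def Zpn_def)
  fix u
  have "int (dotp n d u) = (\<Sum>k<n. int (d k) * int (u k))"
    by (simp add: dotp_def)
  also have "[\<dots> = (\<Sum>k<n. c k * int (u k))] (mod int p)"
    by (rule cong_sum) (simp add: int_d cong_def mod_mult_left_eq)
  also have "(\<Sum>k<n. c k * int (u k)) = x * int (u i) + y * int (u j)"
    using i j by (simp add: c_def sum.distrib distrib_right if_distrib[of "\<lambda>z. z * _"] cong: if_cong)
  finally show "[int (dotp n d u) = x * int (u i) + y * int (u j)] (mod int p)" .
qed

lemma cong_dotp_mod_iff:
  assumes "p \<ge> 2" "r < p"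
  shows "[int (dotp n d v) = int r] (mod int p) \<longleftrightarrow> dotp_mod n p d v = r"
  unfolding cong_int_iff using assms by (simp add: cong_def dotp_mod_def)

lemma Xtail_obtain_unit_entry:
  assumes "prime p" "v \<in> Xtail n p"
  obtains i z where "i \<in> {1..<n}" and "[int (v i) * z = 1] (mod int p)"
proof -
  obtain i where i: "i \<in> {1..<n}" "v i \<noteq> 0" and "v i < p"
    using assms(2) by (auto simp: Xtail_def head_zero_def Zpn_def)
  then have "\<not> int p dvd int (v i)"
    by (simp add: nat_dvd_not_less)
  then have "coprime (int (v i)) (int p)"
    using assms(1) by (simp add: coprime_commute prime_imp_coprime)
  then show thesis
    using that[OF i(1)] cong_solve_coprime_int by blast
qed

lemma Xtail_obtain_form_one:
  assumes "prime p" "v \<in> Xtail n p"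
  obtains d where "d \<in> head_zero n p" and "dotp_mod n p d v = 1"
proof -
  obtain i z where i: "i \<in> {1..<n}" and z: "[int (v i) * z = 1] (mod int p)"
    using Xtail_obtain_unit_entry[OF assms] .
  obtain d where d: "d \<in> head_zero n p"
    and form: "\<And>u. [int (dotp n d u) = z * int (u i) + 0 * int (u i)] (mod int p)"
    using obtain_head_zero_form[where x = z and y = 0, OF prime_gt_0_nat[OF assms(1)] i i] by blast
  have "[int (dotp n d v) = 1] (mod int p)"
    using cong_trans[OF form[of v]] z by (simp add: mult.commute)
  then show thesis
    using that[OF d] cong_dotp_mod_iff[of p 1] prime_ge_2_nat[OF assms(1)] by simp
qed

definition multiples :: "nat \<Rightarrow> (nat \<Rightarrow> nat) \<Rightarrow> (nat \<Rightarrow> nat) set" where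
  "multiples p v = (\<lambda>c i. (c * v i) mod p) ` {..<p}"

lemma card_multiples_le: "card (multiples p v) \<le> p"
  unfolding multiples_def using card_image_le[of "{..<p}"] by simp

lemma not_multiple_obtain_nonzero_minor:
  assumes p: "p > 0" and z: "[int (v i) * z = 1] (mod int p)"
    and w: "w \<in> Zpn n p" and not_mult: "w \<notin> multiples p v"
  obtains j where "\<not> [int (v i) * int (w j) = int (v j) * int (w i)] (mod int p)"
proof (rule ccontr)
  assume "\<not> thesis"
  with that have minors: "[int (v i) * int (w j) = int (v j) * int (w i)] (mod int p)" for j
    by blast
  define c where "c = nat ((int (w i) * z) mod int p)"
  have int_c: "int c = (int (w i) * z) mod int p"
    using p by (simp add: c_def)
  have "w j = (c * v j) mod p" for j
  proof -
    have "[int (w j) = int (w j) * (int (v i) * z)] (mod int p)"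
      using cong_scalar_left[OF z, of "int (w j)"] by (simp add: cong_sym)
    also have "int (w j) * (int (v i) * z) = z * (int (v i) * int (w j))"
      by simp
    also have "[\<dots> = z * (int (v j) * int (w i))] (mod int p)"
      using minors by (rule cong_scalar_left)
    also have "z * (int (v j) * int (w i)) = int (v j) * (int (w i) * z)"
      by simp
    also have "[\<dots> = int (v j) * int c] (mod int p)"
      unfolding int_c by (rule cong_scalar_left) simp
    finally have "[w j = c * v j] (mod p)"
      by (simp add: cong_int_iff[symmetric] mult.commute)
    moreover have "w j < p"
      using w p by (cases "j < n") (auto simp: Zpn_def)
    ultimately show ?thesis
      by (simp add: cong_def)
  qed
  moreover have "c < p"
    using p by (simp add: c_def nat_less_iff)
  ultimately have "w \<in> multiples p v"
    unfolding multiples_def by blast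
  with not_mult show False ..
qed

(* Cramer's rule in the two coordinates of a nonvanishing 2x2 minor of v and w. *)
lemma Xtail_obtain_separating_form:
  assumes prime: "prime p" and v: "v \<in> Xtail n p" and w: "w \<in> head_zero n p"
    and not_mult: "w \<notin> multiples p v"
  obtains d where "d \<in> head_zero n p" and "dotp_mod n p d v = 1" and "dotp_mod n p d w = 0"
proof -
  have p: "p > 0" "p \<ge> 2"
    using prime by (simp_all add: prime_gt_0_nat prime_ge_2_nat)
  obtain i z where i: "i \<in> {1..<n}" and z: "[int (v i) * z = 1] (mod int p)"
    using Xtail_obtain_unit_entry[OF prime v] .
  obtain j where j: "\<not> [int (v i) * int (w j) = int (v j) * int (w i)] (mod int p)"
    using not_multiple_obtain_nonzero_minor[OF p(1) z _ not_mult] w by (auto simp: head_zero_def)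
  have "j \<in> {1..<n}"
    using j v w by (cases "j = 0 \<or> j \<ge> n") (auto simp: Xtail_def head_zero_def Zpn_def)
  have "\<not> int p dvd int (v i) * int (w j) - int (v j) * int (w i)"
    using j by (simp add: cong_iff_dvd_diff)
  then have "coprime (int (v i) * int (w j) - int (v j) * int (w i)) (int p)"
    using prime by (simp add: coprime_commute prime_imp_coprime)
  then obtain x y where
      xv: "[x * int (v i) + y * int (v j) = 1] (mod int p)"
    and xw: "[x * int (w i) + y * int (w j) = 0] (mod int p)"
    by (rule cong_solve_2x2_int)
  obtain d where d: "d \<in> head_zero n p"
    and form: "\<And>u. [int (dotp n d u) = x * int (u i) + y * int (u j)] (mod int p)"
    using obtain_head_zero_form[OF p(1) i \<open>j \<in> {1..<n}\<close>] by blast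
  have "dotp_mod n p d v = 1"
    using cong_dotp_mod_iff[of p 1] cong_trans[OF form xv] p by simp
  moreover have "dotp_mod n p d w = 0"
    using cong_dotp_mod_iff[of p 0] cong_trans[OF form xw] p by simp
  ultimately show thesis
    using that[OF d] by blast
qed

section \<open>The second moment\<close>

lemma sum_Lcoeffs_equidistributed:
  fixes F :: "nat \<Rightarrow> real"
  assumes "prime p" "v \<in> Xtail n p"
  shows "real p * (\<Sum>a\<in>Lcoeffs n p. F (dotp_mod n p a v))
       = real (card (Lcoeffs n p)) * (\<Sum>s<p. F s)"
proof -
  obtain d where d: "d \<in> head_zero n p" "dotp_mod n p d v = 1"
    using Xtail_obtain_form_one[OF assms] .
  have "dotp_mod n p d (\<lambda>_. 0) = 0"
    by (simp add: dotp_mod_def dotp_def)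
  from sum_Lcoeffs_translation_invariant[OF prime_ge_2_nat[OF assms(1)] d this, of F "\<lambda>_. 1"]
  show ?thesis
    by simp
qed

lemma sum_Lcoeffs_decorrelated:
  fixes F H :: "nat \<Rightarrow> real"
  assumes "prime p" "v \<in> Xtail n p" "w \<in> head_zero n p" "w \<notin> multiples p v"
    and "(\<Sum>s<p. F s) = 0"
  shows "(\<Sum>a\<in>Lcoeffs n p. F (dotp_mod n p a v) * H (dotp_mod n p a w)) = 0"
proof -
  obtain d where d: "d \<in> head_zero n p" "dotp_mod n p d v = 1" "dotp_mod n p d w = 0"
    using Xtail_obtain_separating_form[OF assms(1-4)] .
  from sum_Lcoeffs_translation_invariant[OF prime_ge_2_nat[OF assms(1)] d, of F H] assms(1,5)
  show ?thesis
    by (simp add: prime_gt_0_nat)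
qed

lemma sum_Lcoeffs_product_le:
  assumes "prime p" "v \<in> Xtail n p" "w \<in> Xtail n p"
    and "(\<Sum>s<p. (F s)\<^sup>2) \<le> real p * B" "(\<Sum>s<p. (G s)\<^sup>2) \<le> real p * B"
  shows "(\<Sum>a\<in>Lcoeffs n p. F (dotp_mod n p a v) * G (dotp_mod n p a w))
       \<le> real (card (Lcoeffs n p)) * B"
proof -
  let ?A = "Lcoeffs n p"
  have mean_square: "(\<Sum>a\<in>?A. (H (dotp_mod n p a u))\<^sup>2) \<le> real (card ?A) * B"
    if "u \<in> Xtail n p" "(\<Sum>s<p. (H s)\<^sup>2) \<le> real p * B" for u H
  proof -
    have "real p * (\<Sum>a\<in>?A. (H (dotp_mod n p a u))\<^sup>2) = real (card ?A) * (\<Sum>s<p. (H s)\<^sup>2)"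
      by (rule sum_Lcoeffs_equidistributed[OF assms(1) that(1)])
    also have "\<dots> \<le> real p * (real (card ?A) * B)"
      using mult_left_mono[OF that(2), of "real (card ?A)"] by (simp add: mult.left_commute)
    finally show ?thesis
      using prime_gt_0_nat[OF assms(1)] by simp
  qed
  have "(\<Sum>a\<in>?A. F (dotp_mod n p a v) * G (dotp_mod n p a w))
      \<le> (\<Sum>a\<in>?A. ((F (dotp_mod n p a v))\<^sup>2 + (G (dotp_mod n p a w))\<^sup>2) / 2)"
  proof (rule sum_mono)
    fix a
    show "F (dotp_mod n p a v) * G (dotp_mod n p a w)
        \<le> ((F (dotp_mod n p a v))\<^sup>2 + (G (dotp_mod n p a w))\<^sup>2) / 2"
      using sum_squares_bound[of "F (dotp_mod n p a v)" "G (dotp_mod n p a w)"] by simp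
  qed
  also have "\<dots> = ((\<Sum>a\<in>?A. (F (dotp_mod n p a v))\<^sup>2) + (\<Sum>a\<in>?A. (G (dotp_mod n p a w))\<^sup>2)) / 2"
    by (simp add: sum.distrib flip: sum_divide_distrib)
  also have "\<dots> \<le> real (card ?A) * B"
    using mean_square[OF assms(2,4)] mean_square[OF assms(3,5)] by simp
  finally show ?thesis .
qed

(* Only the at most p multiples w of v contribute. *)
lemma sum_Xtail_correlations_le:
  assumes prime: "prime p" and v: "v \<in> Xtail n p"
    and centred: "\<forall>u\<in>Xtail n p. (\<Sum>s<p. F u s) = 0"
    and mean_square: "\<forall>u\<in>Xtail n p. (\<Sum>s<p. (F u s)\<^sup>2) \<le> real p * B"
  shows "(\<Sum>w\<in>Xtail n p. \<Sum>a\<in>Lcoeffs n p. F v (dotp_mod n p a v) * F w (dotp_mod n p a w))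
       \<le> real p * real (card (Lcoeffs n p)) * B"
proof -
  let ?A = "Lcoeffs n p" and ?V = "Xtail n p" and ?M = "multiples p v"
  have "0 \<le> real p * B"
    using mean_square v sum_nonneg[of "{..<p}" "\<lambda>s. (F v s)\<^sup>2"] by force
  then have B: "0 \<le> B"
    using prime_gt_0_nat[OF prime] by (simp add: zero_le_mult_iff)
  have "(\<Sum>w\<in>?V. \<Sum>a\<in>?A. F v (dotp_mod n p a v) * F w (dotp_mod n p a w))
      \<le> (\<Sum>w\<in>?V. if w \<in> ?M then real (card ?A) * B else 0)"
  proof (rule sum_mono)
    fix w assume w: "w \<in> ?V"
    then have "w \<in> head_zero n p"
      by (simp add: Xtail_def)
    with w show "(\<Sum>a\<in>?A. F v (dotp_mod n p a v) * F w (dotp_mod n p a w))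
        \<le> (if w \<in> ?M then real (card ?A) * B else 0)"
      using sum_Lcoeffs_product_le[OF prime v w] sum_Lcoeffs_decorrelated[OF prime v]
        centred mean_square v by simp
  qed
  also have "\<dots> = real (card (?V \<inter> ?M)) * real (card ?A) * B"
    by (simp add: sum.inter_restrict[OF finite_Xtail, symmetric])
  also have "\<dots> \<le> real p * real (card ?A) * B"
  proof -
    have "card (?V \<inter> ?M) \<le> p"
      using card_mono[of ?M "?V \<inter> ?M"] card_multiples_le[of p v]
      by (simp add: multiples_def)
    then show ?thesis
      using B by (simp add: mult_right_mono)
  qed
  finally show ?thesis .
qed

lemma second_moment_le:
  assumes "prime p"
    and "\<forall>u\<in>Xtail n p. (\<Sum>s<p. F u s) = 0"
    and "\<forall>u\<in>Xtail n p. (\<Sum>s<p. (F u s)\<^sup>2) \<le> real p * B"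
  shows "(\<Sum>a\<in>Lcoeffs n p. (\<Sum>v\<in>Xtail n p. F v (dotp_mod n p a v))\<^sup>2)
       \<le> real (card (Xtail n p)) * (real p * real (card (Lcoeffs n p)) * B)"
proof -
  let ?A = "Lcoeffs n p" and ?V = "Xtail n p"
  have "(\<Sum>a\<in>?A. (\<Sum>v\<in>?V. F v (dotp_mod n p a v))\<^sup>2)
      = (\<Sum>v\<in>?V. \<Sum>w\<in>?V. \<Sum>a\<in>?A. F v (dotp_mod n p a v) * F w (dotp_mod n p a w))"
    unfolding power2_eq_square sum_product
    by (subst sum.swap) (simp add: sum.swap[of _ ?A])
  also have "\<dots> \<le> (\<Sum>v\<in>?V. real p * real (card ?A) * B)"
    by (rule sum_mono) (rule sum_Xtail_correlations_le[OF assms(1) _ assms(2,3)])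
  finally show ?thesis
    by simp
qed

section \<open>Fibres of Xhat and the bias of a predicate\<close>

definition one_minus_mod :: "nat \<Rightarrow> nat \<Rightarrow> nat" where
  "one_minus_mod p s = (p + 1 - s) mod p"

lemma add_mod_eq_one_iff:
  assumes "p \<ge> 2" "s < p" "t < p"
  shows "(t + s) mod p = 1 \<longleftrightarrow> t = one_minus_mod p s"
proof -
  have "(p + 1 - s) + s = 1 + p"
    using assms by simp
  then have "(t + s) mod p = 1 \<longleftrightarrow> [t + s = (p + 1 - s) + s] (mod p)"
    using assms by (simp only: cong_def mod_add_self2) simp
  also have "\<dots> \<longleftrightarrow> [t = p + 1 - s] (mod p)"
    by (rule cong_add_rcancel_nat)
  also have "\<dots> \<longleftrightarrow> t = one_minus_mod p s"
    using assms by (simp add: cong_def one_minus_mod_def)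
  finally show ?thesis .
qed

lemma one_minus_mod_less: "p > 0 \<Longrightarrow> one_minus_mod p s < p"
  by (simp add: one_minus_mod_def)

lemma bij_one_minus_mod:
  assumes "p \<ge> 2"
  shows "bij_betw (one_minus_mod p) {..<p} {..<p}"
proof -
  have involution: "\<forall>s\<in>{..<p}. one_minus_mod p (one_minus_mod p s) = s"
  proof
    fix s assume "s \<in> {..<p}"
    then have s: "s < p"
      by simp
    let ?t = "one_minus_mod p s"
    have t: "?t < p"
      using assms by (simp add: one_minus_mod_less)
    then have "(?t + s) mod p = 1"
      using add_mod_eq_one_iff[OF assms s] by blast
    then show "one_minus_mod p ?t = s"
      using add_mod_eq_one_iff[OF assms t s] by (simp add: add.commute)
  qed
  show ?thesis
    by (rule bij_betw_byWitness[where f' = "one_minus_mod p", OF involution involution])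
      (use assms one_minus_mod_less in auto)
qed

lemma inj_on_pair_fun_upd_zero: "inj_on (\<lambda>(t, v). v(0 := t)) (A \<times> Xtail n p)"
  by (rule inj_onI) (auto simp: Xtail_def head_zero_def fun_upd_zero_eq_iff)

lemma inj_on_fun_upd_zero: "inj_on (\<lambda>v. v(0 := \<phi> v)) (Xtail n p)"
  by (rule inj_onI) (auto simp: Xtail_def head_zero_def fun_upd_zero_eq_iff)

lemma Xhat_eq_image: "Xhat n p = (\<lambda>(t, v). v(0 := t)) ` ({..<p} \<times> Xtail n p)"
proof
  show "Xhat n p \<subseteq> (\<lambda>(t, v). v(0 := t)) ` ({..<p} \<times> Xtail n p)"
  proof
    fix x assume x: "x \<in> Xhat n p"
    then have "x 0 < p" "x(0 := 0) \<in> Xtail n p"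
      by (auto simp: Xhat_def Xtail_def head_zero_def Zpn_def)
    then show "x \<in> (\<lambda>(t, v). v(0 := t)) ` ({..<p} \<times> Xtail n p)"
      by (intro image_eqI[where x = "(x 0, x(0 := 0))"]) auto
  qed
  show "(\<lambda>(t, v). v(0 := t)) ` ({..<p} \<times> Xtail n p) \<subseteq> Xhat n p"
    by (force simp: Xhat_def Xtail_def head_zero_def Zpn_def)
qed

lemma sum_Xhat: "(\<Sum>x\<in>Xhat n p. h x) = (\<Sum>v\<in>Xtail n p. \<Sum>t<p. h (v(0 := t)))"
proof -
  have "(\<Sum>x\<in>Xhat n p. h x) = (\<Sum>(t, v)\<in>{..<p} \<times> Xtail n p. h (v(0 := t)))"
    unfolding Xhat_eq_image by (subst sum.reindex[OF inj_on_pair_fun_upd_zero]) (simp add: case_prod_beta')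
  also have "\<dots> = (\<Sum>v\<in>Xtail n p. \<Sum>t<p. h (v(0 := t)))"
    by (simp add: sum.cartesian_product[symmetric] sum.swap[of _ "{..<p}"])
  finally show ?thesis .
qed

lemma dotp_fun_upd_zero:
  assumes "a 0 = 1" "v 0 = 0" "n > 0"
  shows "dotp n a (v(0 := t)) = t + dotp n a v"
proof -
  have "dotp n a (v(0 := t)) = (\<Sum>i<n. a i * v i + (if i = 0 then t else 0))"
    unfolding dotp_def by (rule sum.cong) (auto simp: assms)
  then show ?thesis
    using assms by (simp add: sum.distrib dotp_def)
qed

lemma Sf_Lpred_eq_image:
  assumes p: "p \<ge> 2" and a: "a \<in> Lcoeffs n p"
  shows "Sf n p (Lpred n p a) = (\<lambda>v. v(0 := one_minus_mod p (dotp_mod n p a v))) ` Xtail n p"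
proof -
  have "n > 0" "a 0 = 1"
    using a by (auto simp: Lcoeffs_def Zpn_def intro: ccontr)
  have on_fibre: "dotp n a (v(0 := t)) mod p = 1 \<longleftrightarrow> t = one_minus_mod p (dotp_mod n p a v)"
    if "t < p" "v \<in> Xtail n p" for t v
  proof -
    have "dotp n a (v(0 := t)) mod p = (t + dotp_mod n p a v) mod p"
      using that \<open>n > 0\<close> \<open>a 0 = 1\<close>
      by (simp add: dotp_fun_upd_zero Xtail_def head_zero_def dotp_mod_def mod_add_right_eq)
    then show ?thesis
      using add_mod_eq_one_iff[OF p _ that(1)] p by (simp add: dotp_mod_def)
  qed
  have Sf: "Sf n p (Lpred n p a) = {x \<in> Xhat n p. dotp n a x mod p = 1}"
    by (auto simp: Sf_def Lpred_def)
  show ?thesis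
  proof (intro equalityI subsetI)
    fix x assume "x \<in> Sf n p (Lpred n p a)"
    then have "x \<in> Xhat n p" "dotp n a x mod p = 1"
      by (simp_all add: Sf)
    obtain t v where tv: "t < p" "v \<in> Xtail n p" "x = v(0 := t)"
      using \<open>x \<in> Xhat n p\<close> unfolding Xhat_eq_image by auto
    with \<open>dotp n a x mod p = 1\<close> have "t = one_minus_mod p (dotp_mod n p a v)"
      using on_fibre by simp
    with tv show "x \<in> (\<lambda>v. v(0 := one_minus_mod p (dotp_mod n p a v))) ` Xtail n p"
      by blast
  next
    fix x assume "x \<in> (\<lambda>v. v(0 := one_minus_mod p (dotp_mod n p a v))) ` Xtail n p"
    then obtain v where v: "v \<in> Xtail n p" and x: "x = v(0 := one_minus_mod p (dotp_mod n p a v))"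
      by blast
    have t: "one_minus_mod p (dotp_mod n p a v) < p"
      using p by (simp add: one_minus_mod_less)
    have "x \<in> Xhat n p"
      unfolding Xhat_eq_image x
      by (rule image_eqI[where x = "(one_minus_mod p (dotp_mod n p a v), v)"]) (use v t in auto)
    moreover have "dotp n a x mod p = 1"
      using on_fibre[OF t v] x by simp
    ultimately show "x \<in> Sf n p (Lpred n p a)"
      by (simp add: Sf)
  qed
qed

definition fibre_dev :: "nat \<Rightarrow> ((nat \<Rightarrow> nat) \<Rightarrow> real) \<Rightarrow> (nat \<Rightarrow> nat) \<Rightarrow> nat \<Rightarrow> real" where
  "fibre_dev p g v s = g (v(0 := one_minus_mod p s)) - avg {..<p} (\<lambda>t. g (v(0 := t)))"

definition bias :: "nat \<Rightarrow> nat \<Rightarrow> ((nat \<Rightarrow> nat) \<Rightarrow> real) \<Rightarrow> (nat \<Rightarrow> nat) \<Rightarrow> real" where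
  "bias n p g a = (\<Sum>v\<in>Xtail n p. fibre_dev p g v (dotp_mod n p a v))"

lemma sum_fibre_dev:
  assumes "p \<ge> 2"
  shows "(\<Sum>s<p. fibre_dev p g v s) = 0"
  unfolding fibre_dev_def
  using sum.reindex_bij_betw[OF bij_one_minus_mod[OF assms],
      of "\<lambda>t. g (v(0 := t)) - avg {..<p} (\<lambda>t. g (v(0 := t)))"]
  by (simp add: sum_diff_avg)

lemma sum_fibre_dev_sq_le:
  assumes p: "p \<ge> 2" and v: "v \<in> Xtail n p" and g: "\<forall>x\<in>Xhat n p. \<bar>g x\<bar> \<le> 1"
  shows "(\<Sum>s<p. (fibre_dev p g v s)\<^sup>2) \<le> real p"
proof -
  have "(\<Sum>s<p. (fibre_dev p g v s)\<^sup>2) = (\<Sum>t<p. (g (v(0 := t)) - avg {..<p} (\<lambda>t. g (v(0 := t))))\<^sup>2)"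
    unfolding fibre_dev_def
    by (rule sum.reindex_bij_betw[OF bij_one_minus_mod[OF p]])
  also have "\<dots> \<le> (\<Sum>t<p. (g (v(0 := t)))\<^sup>2)"
    by (rule sum_sq_diff_avg_le) simp
  also have "\<dots> \<le> (\<Sum>t<p. 1)"
  proof (rule sum_mono)
    fix t assume "t \<in> {..<p}"
    then have "v(0 := t) \<in> Xhat n p"
      using v unfolding Xhat_eq_image by (intro image_eqI[where x = "(t, v)"]) auto
    then show "(g (v(0 := t)))\<^sup>2 \<le> 1"
      using g abs_square_le_1 by blast
  qed
  finally show ?thesis
    by simp
qed

lemma avg_Sf_Lpred_diff:
  assumes p: "p \<ge> 2" and a: "a \<in> Lcoeffs n p"
  shows "avg (Sf n p (Lpred n p a)) g - avg (Xhat n p) g = bias n p g a / real (card (Xtail n p))"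
proof -
  let ?V = "Xtail n p"
  have "card (Xhat n p) = p * card ?V"
    using sum_Xhat[where h = "\<lambda>_. 1::nat"] by simp
  then have "avg (Xhat n p) g = (\<Sum>v\<in>?V. avg {..<p} (\<lambda>t. g (v(0 := t)))) / real (card ?V)"
    using p by (simp add: avg_def sum_Xhat sum_divide_distrib[symmetric] field_simps)
  moreover have "avg (Sf n p (Lpred n p a)) g
      = (\<Sum>v\<in>?V. g (v(0 := one_minus_mod p (dotp_mod n p a v)))) / real (card ?V)"
    unfolding avg_def Sf_Lpred_eq_image[OF p a]
    by (simp add: sum.reindex[OF inj_on_fun_upd_zero] card_image[OF inj_on_fun_upd_zero])
  ultimately show ?thesis
    by (simp add: bias_def fibre_dev_def sum_subtractf diff_divide_distrib)
qed

lemma sum_bias_sq_le: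
  assumes prime: "prime p" and g: "\<forall>x\<in>Xhat n p. \<bar>g x\<bar> \<le> 1"
  shows "(\<Sum>a\<in>Lcoeffs n p. (bias n p g a)\<^sup>2) \<le> 2 * real p * (real (card (Xtail n p)))\<^sup>2"
proof -
  let ?N = "card (Xtail n p)"
  have p: "p \<ge> 2"
    using prime by (rule prime_ge_2_nat)
  have "(\<Sum>a\<in>Lcoeffs n p. (bias n p g a)\<^sup>2) \<le> real ?N * (real p * real (card (Lcoeffs n p)) * 1)"
    unfolding bias_def
    by (rule second_moment_le[OF prime]) (simp_all add: sum_fibre_dev[OF p] sum_fibre_dev_sq_le[OF p _ g])
  also have "\<dots> = real p * real (?N * card (Lcoeffs n p))"
    by simp
  also have "\<dots> \<le> real p * real (2 * ?N\<^sup>2)"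
  proof -
    have "?N * card (Lcoeffs n p) \<le> ?N * (?N + 1)"
      using card_Lcoeffs_le by (rule mult_left_mono) simp
    also have "\<dots> \<le> 2 * ?N\<^sup>2"
      by (cases "?N = 0") (simp_all add: power2_eq_square)
    finally have "real (?N * card (Lcoeffs n p)) \<le> real (2 * ?N\<^sup>2)"
      by (rule of_nat_mono)
    then show ?thesis
      by (rule mult_left_mono) simp
  qed
  finally show ?thesis
    by simp
qed

lemma card_not_xi_independent_le:
  assumes p: "p \<ge> 2" and V: "Xtail n p \<noteq> {}"
  shows "card {f \<in> Lclass n p. \<not> xi_independent n p \<xi> f g}
       \<le> card {a \<in> Lcoeffs n p. \<xi> * real (card (Xtail n p)) < \<bar>bias n p g a\<bar>}"
proof -
  let ?B = "{a \<in> Lcoeffs n p. \<xi> * real (card (Xtail n p)) < \<bar>bias n p g a\<bar>}"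
  have N: "real (card (Xtail n p)) > 0"
    using V finite_Xtail by (simp add: card_gt_0_iff)
  have "{f \<in> Lclass n p. \<not> xi_independent n p \<xi> f g} \<subseteq> Lpred n p ` ?B"
  proof
    fix f assume f: "f \<in> {f \<in> Lclass n p. \<not> xi_independent n p \<xi> f g}"
    then obtain a where a: "a \<in> Lcoeffs n p" "f = Lpred n p a"
      by (auto simp: Lclass_def Lcoeffs_def)
    with f have "\<xi> < \<bar>bias n p g a\<bar> / real (card (Xtail n p))"
      by (simp add: xi_independent_def avg_Sf_Lpred_diff[OF p] abs_divide)
    with a N show "f \<in> Lpred n p ` ?B"
      by (simp add: pos_less_divide_eq)
  qed
  then have "card {f \<in> Lclass n p. \<not> xi_independent n p \<xi> f g} \<le> card (Lpred n p ` ?B)"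
    by (rule card_mono[rotated]) (simp add: finite_Lcoeffs)
  also have "\<dots> \<le> card ?B"
    by (rule card_image_le) (simp add: finite_Lcoeffs)
  finally show ?thesis .
qed

theorem mainTheorem4:
  fixes p n :: nat and g :: "(nat \<Rightarrow> nat) \<Rightarrow> real"
  assumes "prime p" and "n \<ge> 2"
    and "\<forall>x\<in>Xhat n p. g x = -1 \<or> g x = 1"
  shows "real (card {f \<in> Lclass n p. \<not> xi_independent n p (1 / real p powr (real n / 3)) f g})
           \<le> real p powr (2 * real n / 3 + 2)"
proof -
  define \<xi> where "\<xi> = 1 / real p powr (real n / 3)"
  let ?N = "real (card (Xtail n p))"
  let ?K = "card {a \<in> Lcoeffs n p. \<xi> * ?N < \<bar>bias n p g a\<bar>}"
  have p: "p \<ge> 2"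
    using assms(1) by (rule prime_ge_2_nat)
  have V: "Xtail n p \<noteq> {}"
    using Xtail_nonempty[OF p assms(2)] .
  then have N: "card (Xtail n p) > 0"
    using finite_Xtail by (simp add: card_gt_0_iff)
  have g: "\<forall>x\<in>Xhat n p. \<bar>g x\<bar> \<le> 1"
    using assms(3) by auto
  have "real ?K * (\<xi> * ?N)\<^sup>2 \<le> (\<Sum>a\<in>Lcoeffs n p. (bias n p g a)\<^sup>2)"
    by (rule card_abs_gt_mult_sq_le) (simp_all add: finite_Lcoeffs \<xi>_def)
  also have "\<dots> \<le> 2 * real p * ?N\<^sup>2"
    by (rule sum_bias_sq_le[OF assms(1) g])
  finally have "(real ?K * \<xi>\<^sup>2) * ?N\<^sup>2 \<le> (2 * real p) * ?N\<^sup>2"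
    by (simp add: power_mult_distrib mult_ac)
  then have "real ?K * (1 / real p powr (real n / 3))\<^sup>2 \<le> 2 * real p"
    using N by (simp add: \<xi>_def)
  then have "real ?K \<le> real p powr (2 * real n / 3 + 2)"
    using le_powr_if_mult_inverse_sq_le[of "real p" "real ?K" "real n / 3"] p by simp
  moreover have "card {f \<in> Lclass n p. \<not> xi_independent n p \<xi> f g} \<le> ?K"
    by (rule card_not_xi_independent_le[OF p V])
  ultimately show ?thesis
    by (simp add: \<xi>_def)
qed

end
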